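(* Let $(\Psi,\vec u,E)$ be a GCD-to-DIV triple with witnessing variable families $\vec z,\vec y,\vec w$. If $\Psi$ is not in increasing form (for any order), then there is a non-constant polynomial $f$ that is the primitive part of a left-hand side of a divisibility of $\Psi$ such that $M_f(\Psi)\cap\mathbb Z\ne\{0\}$ (here $\mathbb Z$ denotes the constant polynomials). If $\Psi$ is in increasing form, then $\Psi$ is in increasing form for every total order in which all variables of $\vec z$ precede all variables of $\vec y$, which precede all variables of $\vec w$ (i.e. $\Psi$ is $3$-increasing with partition $\vec z,\vec y,\vec w$).
   Context: For integers $a\mid b$ means there is a unique $q$ with $b=qa$. A system of divisibility constraints is $\bigwedge_i f_i\mid g_i$ with linear integer polynomials $f_i\neq0$. A linear polynomial is primitive if non-zero with coefficients and constant having gcd $1$; the primitive part of non-zero $g$ is the primitive $f$ with $g=\gcd(g)f$; $\mathbb Zf=\{bf:b\in\mathbb Z\}$. GCD-to-DIV triple: $(\Psi,\vec u,E)$ such that there are $d,m\in\mathbb N$ and three disjoint families of variables $\vec z,\vec y,\vec w$ with: (1) $\Psi(\vec z,\vec y,\vec w)$ is a system of divisibility constraints in $m$ variables, $\vec u\in\mathbb Z^d$, $E\in\mathbb Z^{d\times m}$, each column of $E$ corresponding to a variable of $\Psi$; (2) each divisibility of $\Psi$ has the form $h(\vec z)\mid f(\vec y)$ or $f(\vec y)\mid g(\vec w)$ with $g$ non-constant, all polynomials have only non-negative coefficients and constants, and every left-hand side has a strictly positive constant; (3) each variable $z$ of $\vec z$ appears in a single polynomial of $\Psi$, which has the form $z+c$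 with $c$ a positive integer and occurs in exactly two divisibilities (as left-hand side); (4) each variable $w$ of $\vec w$ appears in exactly two polynomials, of the forms $w$ and $w+c$ with $c$ a positive integer, each occurring exactly once in $\Psi$ (as right-hand sides); (5) every column of $E$ corresponding to a variable of $\vec z$ or $\vec w$ is zero. For primitive $f$, $M_f(\Psi)$ is the smallest set of linear polynomials containing $f$, closed under integer linear combinations, and such that whenever $g\mid h$ is a constraint of $\Psi$ and $bg\in M_f(\Psi)$ for some $b\in\mathbb Z$, then $bh\in M_f(\Psi)$. For a total order $x_1\preceq\dots\preceq x_n$, $\mathrm{lv}(f)$ is the largest variable with non-zero coefficient; $\Psi$ is in increasing form for $\preceq$ if for every $k$ and primitive $f$ with $\mathrm{lv}(f)=x_k$, $M_f(\Psi)\cap\mathbb Z[x_1,\dots,x_k]=\mathbb Zf$; $\Psi$ is in increasing form if it is so for some total order. *)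

theory Defs
  imports Main
begin

text \<open>A linear integer polynomial in the variables 0,1,2,... (natural numbers) is a pair
  (coefficient function, constant).  The polynomial (a, c) denotes sum_i a i * x_i + c.\<close>

type_synonym lin = "(nat \<Rightarrow> int) \<times> int"

definition lin_zero :: lin where
  "lin_zero = (\<lambda>_. 0, 0)"

definition lin_add :: "lin \<Rightarrow> lin \<Rightarrow> lin" where
  "lin_add p q = (\<lambda>i. fst p i + fst q i, snd p + snd q)"

definition lin_smult :: "int \<Rightarrow> lin \<Rightarrow> lin" where
  "lin_smult a p = (\<lambda>i. a * fst p i, a * snd p)"

definition lin_const :: "int \<Rightarrow> lin" where
  "lin_const c = (\<lambda>_. 0, c)"

definition lin_var_plus :: "nat \<Rightarrow> int \<Rightarrow> lin" where
  "lin_var_plus x c = (\<lambda>i. if i = x then 1 else 0, c)"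

definition lin_var :: "nat \<Rightarrow> lin" where
  "lin_var x = lin_var_plus x 0"

definition lvars :: "lin \<Rightarrow> nat set" where
  "lvars p = {i. fst p i \<noteq> 0}"

definition lin_over :: "nat set \<Rightarrow> lin \<Rightarrow> bool" where
  "lin_over V p \<longleftrightarrow> lvars p \<subseteq> V"

definition lin_content :: "lin \<Rightarrow> int" where
  "lin_content p = Gcd (insert (snd p) (range (fst p)))"

definition primitive :: "lin \<Rightarrow> bool" where
  "primitive p \<longleftrightarrow> p \<noteq> lin_zero \<and> lin_content p = 1"

definition primitive_part_of :: "lin \<Rightarrow> lin \<Rightarrow> bool" where
  "primitive_part_of f g \<longleftrightarrow> g \<noteq> lin_zero \<and> primitive f \<and> g = lin_smult (lin_content g) f"

definition nonneg_lin :: "lin \<Rightarrow> bool" where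
  "nonneg_lin p \<longleftrightarrow> (\<forall>i. fst p i \<ge> 0) \<and> snd p \<ge> 0"

text \<open>A system is a list of constraints (f, g) meaning f | g.\<close>
type_synonym system = "(lin \<times> lin) list"

definition div_system :: "system \<Rightarrow> bool" where
  "div_system \<Psi> \<longleftrightarrow> (\<forall>(f, g) \<in> set \<Psi>. f \<noteq> lin_zero)"

definition occ_count :: "system \<Rightarrow> lin \<Rightarrow> nat" where
  "occ_count \<Psi> p = length (filter (\<lambda>(l, r). l = p \<or> r = p) \<Psi>)"

definition polys_of :: "system \<Rightarrow> lin set" where
  "polys_of \<Psi> = fst ` set \<Psi> \<union> snd ` set \<Psi>"

text \<open>The variables of \<Psi> are 0..m-1, partitioned into Z (the z's), Y (the y's), W (the w's);
  u is a vector of length d (entries u 0 .. u (d-1)); E is a d x m matrix (E i j, i<d, j<m).\<close>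

definition gcd_to_div :: "system \<Rightarrow> (nat \<Rightarrow> int) \<Rightarrow> (nat \<Rightarrow> nat \<Rightarrow> int) \<Rightarrow> nat \<Rightarrow> nat
    \<Rightarrow> nat set \<Rightarrow> nat set \<Rightarrow> nat set \<Rightarrow> bool" where
  "gcd_to_div \<Psi> u E d m Z Y W \<longleftrightarrow>
     \<comment> \<open>(1)\<close>
     div_system \<Psi> \<and>
     Z \<inter> Y = {} \<and> Z \<inter> W = {} \<and> Y \<inter> W = {} \<and> Z \<union> Y \<union> W = {..<m} \<and>
     (\<forall>p \<in> polys_of \<Psi>. lin_over {..<m} p) \<and>
     \<comment> \<open>(2)\<close>
     (\<forall>(l, r) \<in> set \<Psi>.
        ((lin_over Z l \<and> lin_over Y r) \<or> (lin_over Y l \<and> lin_over W r \<and> lvars r \<noteq> {})) \<and>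
        nonneg_lin l \<and> nonneg_lin r \<and> snd l > 0) \<and>
     \<comment> \<open>(3)\<close>
     (\<forall>x \<in> Z. \<exists>c > 0.
        (\<forall>p \<in> polys_of \<Psi>. x \<in> lvars p \<longrightarrow> p = lin_var_plus x c) \<and>
        occ_count \<Psi> (lin_var_plus x c) = 2 \<and>
        (\<forall>(l, r) \<in> set \<Psi>. r \<noteq> lin_var_plus x c)) \<and>
     \<comment> \<open>(4)\<close>
     (\<forall>x \<in> W. \<exists>c > 0.
        (\<forall>p \<in> polys_of \<Psi>. x \<in> lvars p \<longrightarrow> p = lin_var x \<or> p = lin_var_plus x c) \<and>
        occ_count \<Psi> (lin_var x) = 1 \<and> occ_count \<Psi> (lin_var_plus x c) = 1 \<and>
        (\<forall>(l, r) \<in> set \<Psi>. l \<noteq> lin_var x \<and> l \<noteq> lin_var_plus x c)) \<and>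
     \<comment> \<open>(5)\<close>
     (\<forall>i < d. \<forall>j \<in> Z \<union> W. E i j = 0)"

inductive_set Mset :: "system \<Rightarrow> lin \<Rightarrow> lin set" for \<Psi> :: system and f :: lin where
  base: "f \<in> Mset \<Psi> f"
| lincomb: "p \<in> Mset \<Psi> f \<Longrightarrow> q \<in> Mset \<Psi> f \<Longrightarrow>
     lin_add (lin_smult a p) (lin_smult b q) \<in> Mset \<Psi> f"
| propagate: "(g, h) \<in> set \<Psi> \<Longrightarrow> lin_smult b g \<in> Mset \<Psi> f \<Longrightarrow> lin_smult b h \<in> Mset \<Psi> f"

text \<open>A total order on the variables 0..m-1 is given by a rank function r, a bijection
  of {..<m} onto itself: x precedes y iff r x \<le> r y.\<close>
definition var_order :: "nat \<Rightarrow> (nat \<Rightarrow> nat) \<Rightarrow> bool" where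
  "var_order m r \<longleftrightarrow> bij_betw r {..<m} {..<m}"

definition leading_var :: "(nat \<Rightarrow> nat) \<Rightarrow> lin \<Rightarrow> nat \<Rightarrow> bool" where
  "leading_var r f x \<longleftrightarrow> x \<in> lvars f \<and> (\<forall>y \<in> lvars f. r y \<le> r x)"

definition increasing_for :: "system \<Rightarrow> nat \<Rightarrow> (nat \<Rightarrow> nat) \<Rightarrow> bool" where
  "increasing_for \<Psi> m r \<longleftrightarrow>
     (\<forall>f x. lin_over {..<m} f \<and> primitive f \<and> leading_var r f x \<longrightarrow>
        {p \<in> Mset \<Psi> f. lin_over {j. j < m \<and> r j \<le> r x} p} = {lin_smult b f | b. True})"

definition increasing :: "system \<Rightarrow> nat \<Rightarrow> bool" where
  "increasing \<Psi> m \<longleftrightarrow> (\<exists>r. var_order m r \<and> increasing_for \<Psi> m r)"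

end

theory Submission
  imports Defs
begin

text \<open>If the primitive part f of a left-hand side is non-constant and M_f(\<Psi>) contains a
  non-zero constant, increasing form fails at lv(f) for every order, since that constant is not
  a multiple of f.  Conversely, without such f take an order with the z's before the y's before
  the w's, and a primitive f.  If no left-hand side is parallel to f, propagation never fires
  and M_f(\<Psi>) = \<int>f.  Otherwise M_f(\<Psi>) embeds by scaling into M_{f'}(\<Psi>) for the primitive part
  f' of that left-hand side, so it contains no non-zero constant.  If f is a polynomial in the
  z's, every element of M_f(\<Psi>) is k f plus a polynomial in the y's and w's; if f is a
  polynomial in the y's, propagation through a left-hand side in the z's only starts from a
  constant, hence from 0, so every element is k f plus a polynomial in the w's.  Those later
  variables exceed lv(f), so an element below lv(f) is k f plus a constant, which must be 0.\<close>

lemma lin_eq_iff: "(p::lin) = q \<longleftrightarrow> (\<forall>i. fst p i = fst q i) \<and> snd p = snd q"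
  by (auto simp: prod_eq_iff fun_eq_iff)

lemma lin_simps [simp]:
  "fst (lin_smult a p) i = a * fst p i" "snd (lin_smult a p) = a * snd p"
  "fst (lin_add p q) i = fst p i + fst q i" "snd (lin_add p q) = snd p + snd q"
  "fst lin_zero i = 0" "snd lin_zero = 0"
  "fst (lin_const c) i = 0" "snd (lin_const c) = c"
  by (auto simp: lin_smult_def lin_add_def lin_zero_def lin_const_def)

lemma lvars_zero [simp]: "lvars lin_zero = {}"
  by (simp add: lvars_def)

lemma lvars_const [simp]: "lvars (lin_const c) = {}"
  by (simp add: lvars_def)

lemma lvars_smult_subset: "lvars (lin_smult a p) \<subseteq> lvars p"
  by (auto simp: lvars_def)

lemma lvars_smult: "a \<noteq> 0 \<Longrightarrow> lvars (lin_smult a p) = lvars p"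
  by (auto simp: lvars_def)

lemma lin_smult_eq_zero_iff: "lin_smult a p = lin_zero \<longleftrightarrow> a = 0 \<or> p = lin_zero"
  by (auto simp: lin_eq_iff)

lemma primitive_part_exists:
  assumes "g \<noteq> lin_zero"
  shows "\<exists>f. primitive_part_of f g"
proof -
  define c where "c = lin_content g"
  define f where "f = ((\<lambda>i. fst g i div c), snd g div c)"
  define A where "A = insert (snd g) (range (fst g))"
  define B where "B = insert (snd f) (range (fst f))"
  have c: "c = Gcd A" by (simp add: c_def A_def lin_content_def)
  have "\<not> A \<subseteq> {0}" using assms by (auto simp: A_def lin_eq_iff)
  then have "c \<noteq> 0" "c \<ge> 0" using c by simp_all
  have "c dvd a" if "a \<in> A" for a
    using that c by simp
  then have g: "g = lin_smult c f"
    by (auto simp: lin_eq_iff f_def A_def)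
  then have "A = (*) c ` B"
    unfolding A_def B_def by (simp add: image_image lin_eq_iff)
  then have "c = \<bar>c\<bar> * Gcd B"
    using c Gcd_mult[of c B] by (simp add: abs_mult)
  with \<open>c \<noteq> 0\<close> \<open>c \<ge> 0\<close> have "Gcd B = 1" by simp
  then have "primitive f"
    using g assms by (auto simp: primitive_def lin_content_def B_def lin_eq_iff)
  with g assms show ?thesis unfolding primitive_part_of_def c_def by blast
qed

lemma lvars_primitive_part: "primitive_part_of f g \<Longrightarrow> lvars f = lvars g"
  by (metis lin_smult_eq_zero_iff lvars_smult primitive_part_of_def)

lemma smult_in_Mset: "lin_smult b f \<in> Mset \<Psi> f"
proof -
  have "lin_add (lin_smult b f) (lin_smult 0 f) \<in> Mset \<Psi> f"
    by (intro Mset.lincomb Mset.base)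
  moreover have "lin_add (lin_smult b f) (lin_smult 0 f) = lin_smult b f"
    by (simp add: lin_eq_iff)
  ultimately show ?thesis by simp
qed

lemma lincomb_in_Mset:
  assumes "p \<in> Mset \<Psi> f" "q \<in> Mset \<Psi> f"
  shows "lin_add p (lin_smult a q) \<in> Mset \<Psi> f"
proof -
  have "lin_add (lin_smult 1 p) (lin_smult a q) = lin_add p (lin_smult a q)"
    by (simp add: lin_eq_iff)
  then show ?thesis using Mset.lincomb[OF assms, of 1 a] by simp
qed

lemma Mset_smult_transfer:
  assumes "lin_smult k f \<in> Mset \<Psi> f'"
  shows "p \<in> Mset \<Psi> f \<Longrightarrow> lin_smult k p \<in> Mset \<Psi> f'"
proof (induction p rule: Mset.induct)
  case base
  then show ?case using assms .
next
  case (lincomb p q a b)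
  then have "lin_add (lin_smult a (lin_smult k p)) (lin_smult b (lin_smult k q)) \<in> Mset \<Psi> f'"
    by (intro Mset.lincomb)
  moreover have "lin_add (lin_smult a (lin_smult k p)) (lin_smult b (lin_smult k q))
      = lin_smult k (lin_add (lin_smult a p) (lin_smult b q))"
    by (simp add: lin_eq_iff algebra_simps)
  ultimately show ?case by simp
next
  case (propagate g h b)
  have "lin_smult k (lin_smult b p) = lin_smult (k * b) p" for p
    by (simp add: lin_eq_iff algebra_simps)
  with propagate show ?case
    by (metis Mset.propagate)
qed

lemma Mset_eq_multiples_if_no_parallel_lhs:
  assumes "\<not> (\<exists>g h b k. (g, h) \<in> set \<Psi> \<and> b \<noteq> 0 \<and> lin_smult b g = lin_smult k f)"
  shows "e \<in> Mset \<Psi> f \<Longrightarrow> \<exists>b. e = lin_smult b f"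
proof (induction e rule: Mset.induct)
  case base
  show ?case by (rule exI[of _ 1]) (simp add: lin_eq_iff)
next
  case (lincomb p q a b)
  then obtain b1 b2 where "p = lin_smult b1 f" "q = lin_smult b2 f" by blast
  then have "lin_add (lin_smult a p) (lin_smult b q) = lin_smult (a * b1 + b * b2) f"
    by (simp add: lin_eq_iff algebra_simps)
  then show ?case by blast
next
  case (propagate g h b)
  then have "b = 0" using assms by blast
  then have "lin_smult b h = lin_smult 0 f" by (simp add: lin_eq_iff)
  then show ?case by blast
qed

definition smult_plus_over :: "lin \<Rightarrow> nat set \<Rightarrow> lin set" where
  "smult_plus_over f S = {lin_add (lin_smult k f) p | k p. lvars p \<subseteq> S}"

lemma smult_plus_over_if_lvars_subset:
  assumes "lvars p \<subseteq> S"
  shows "p \<in> smult_plus_over f S"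
proof -
  have "p = lin_add (lin_smult 0 f) p" by (simp add: lin_eq_iff)
  with assms show ?thesis unfolding smult_plus_over_def by blast
qed

lemma Mset_subset_smult_plus_over:
  assumes "\<And>g h b. (g, h) \<in> set \<Psi> \<Longrightarrow> lin_smult b g \<in> Mset \<Psi> f \<Longrightarrow>
      lin_smult b g \<in> smult_plus_over f S \<Longrightarrow> lin_smult b h \<in> smult_plus_over f S"
  shows "Mset \<Psi> f \<subseteq> smult_plus_over f S"
proof
  fix e assume "e \<in> Mset \<Psi> f"
  then show "e \<in> smult_plus_over f S"
  proof (induction e rule: Mset.induct)
    case base
    have "f = lin_add (lin_smult 1 f) lin_zero" by (simp add: lin_eq_iff)
    then show ?case unfolding smult_plus_over_def by fastforce
  next
    case (lincomb p q a b)
    then obtain k1 p1 k2 p2 where "lvars p1 \<subseteq> S" "p = lin_add (lin_smult k1 f) p1"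
      "lvars p2 \<subseteq> S" "q = lin_add (lin_smult k2 f) p2"
      unfolding smult_plus_over_def by blast
    moreover have "lvars (lin_add (lin_smult a p1) (lin_smult b p2)) \<subseteq> lvars p1 \<union> lvars p2"
      by (auto simp: lvars_def)
    ultimately have "lvars (lin_add (lin_smult a p1) (lin_smult b p2)) \<subseteq> S"
      and "lin_add (lin_smult a p) (lin_smult b q)
        = lin_add (lin_smult (a * k1 + b * k2) f) (lin_add (lin_smult a p1) (lin_smult b p2))"
      by (auto simp: lin_eq_iff algebra_simps)
    then show ?case unfolding smult_plus_over_def by blast
  next
    case (propagate g h b)
    then show ?case using assms by blast
  qed
qed

lemma Mset_subset_smult_plus_over_rhs:
  assumes "\<forall>(g, h) \<in> set \<Psi>. lvars h \<subseteq> S"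
  shows "Mset \<Psi> f \<subseteq> smult_plus_over f S"
proof (rule Mset_subset_smult_plus_over)
  fix g h b assume "(g, h) \<in> set \<Psi>"
  then have "lvars (lin_smult b h) \<subseteq> S" using assms lvars_smult_subset by fast
  then show "lin_smult b h \<in> smult_plus_over f S" by (rule smult_plus_over_if_lvars_subset)
qed

text \<open>Writing e = k f + p with p over S, both e and k f vanish on S, so p is the constant
  e - k f of M_f(\<Psi>).\<close>
lemma Mset_multiple_if_smult_plus_over:
  assumes "Mset \<Psi> f \<subseteq> smult_plus_over f S"
    and "\<forall>c. lin_const c \<in> Mset \<Psi> f \<longrightarrow> c = 0"
    and "lvars f \<inter> S = {}"
    and "e \<in> Mset \<Psi> f" "lvars e \<inter> S = {}"
  shows "\<exists>b. e = lin_smult b f"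
proof -
  obtain k p where p: "lvars p \<subseteq> S" "e = lin_add (lin_smult k f) p"
    using assms(1,4) unfolding smult_plus_over_def by blast
  have "fst p i = 0" for i
  proof (cases "i \<in> S")
    case True
    then have "fst f i = 0" "fst e i = 0" using assms(3,5) by (auto simp: lvars_def)
    then show ?thesis using p(2) by simp
  next
    case False
    then show ?thesis using p(1) by (auto simp: lvars_def)
  qed
  then have "lin_add e (lin_smult (-k) f) = lin_const (snd p)"
    using p by (simp add: lin_eq_iff)
  moreover have "lin_add e (lin_smult (-k) f) \<in> Mset \<Psi> f"
    using assms(4) by (intro lincomb_in_Mset Mset.base)
  ultimately have "snd p = 0" using assms(2) by metis
  with \<open>\<And>i. fst p i = 0\<close> p have "e = lin_smult k f" by (simp add: lin_eq_iff)
  then show ?thesis by blast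
qed

definition constant_obstruction :: "system \<Rightarrow> bool" where
  "constant_obstruction \<Psi> \<longleftrightarrow>
     (\<exists>f l r. (l, r) \<in> set \<Psi> \<and> primitive_part_of f l \<and> lvars f \<noteq> {} \<and>
        (\<exists>c. c \<noteq> 0 \<and> lin_const c \<in> Mset \<Psi> f))"

lemma leading_var_exists:
  assumes "finite (lvars f)" "lvars f \<noteq> {}"
  obtains x where "leading_var r f x"
proof -
  have "Max (r ` lvars f) \<in> r ` lvars f" using assms by simp
  then obtain x where "x \<in> lvars f" "r x = Max (r ` lvars f)" by (metis imageE)
  with assms have "leading_var r f x" by (simp add: leading_var_def)
  then show ?thesis by (rule that)
qed

lemma not_constant_obstruction_if_increasing:
  assumes "increasing \<Psi> m" "\<And>l r. (l, r) \<in> set \<Psi> \<Longrightarrow> lin_over {..<m} l"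
  shows "\<not> constant_obstruction \<Psi>"
proof
  assume "constant_obstruction \<Psi>"
  then obtain f l r c where lr: "(l, r) \<in> set \<Psi>" and f: "primitive_part_of f l"
    and "lvars f \<noteq> {}" "c \<noteq> 0" "lin_const c \<in> Mset \<Psi> f"
    unfolding constant_obstruction_def by blast
  obtain \<rho> where "increasing_for \<Psi> m \<rho>" using assms(1) by (auto simp: increasing_def)
  have "lin_over {..<m} f"
    using assms(2)[OF lr] lvars_primitive_part[OF f] by (simp add: lin_over_def)
  then have "finite (lvars f)" by (auto simp: lin_over_def intro: finite_subset)
  then obtain x where x: "leading_var \<rho> f x" using \<open>lvars f \<noteq> {}\<close> leading_var_exists by blast
  have "lin_const c \<in> {p \<in> Mset \<Psi> f. lin_over {j. j < m \<and> \<rho> j \<le> \<rho> x} p}"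
    using \<open>lin_const c \<in> Mset \<Psi> f\<close> by (simp add: lin_over_def)
  also have "\<dots> = {lin_smult b f | b. True}"
    using \<open>increasing_for \<Psi> m \<rho>\<close> \<open>lin_over {..<m} f\<close> f x
    unfolding increasing_for_def primitive_part_of_def by blast
  finally obtain b where "lin_const c = lin_smult b f" by blast
  then have "b * fst f x = 0" "b * snd f = c" by (metis lin_simps)+
  with x \<open>c \<noteq> 0\<close> show False by (auto simp: leading_var_def lvars_def)
qed

lemma gcd_to_div_constraint:
  assumes "gcd_to_div \<Psi> u E d m Z Y W" "(l, r) \<in> set \<Psi>"
  shows "(lvars l \<subseteq> Z \<and> lvars r \<subseteq> Y) \<or> (lvars l \<subseteq> Y \<and> lvars r \<subseteq> W)"
    and "snd l > 0"
proof -
  have "\<forall>(l, r) \<in> set \<Psi>.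
        ((lin_over Z l \<and> lin_over Y r) \<or> (lin_over Y l \<and> lin_over W r \<and> lvars r \<noteq> {})) \<and>
        nonneg_lin l \<and> nonneg_lin r \<and> snd l > 0"
    using assms(1) unfolding gcd_to_div_def by (elim conjE)
  with assms(2) show "(lvars l \<subseteq> Z \<and> lvars r \<subseteq> Y) \<or> (lvars l \<subseteq> Y \<and> lvars r \<subseteq> W)" "snd l > 0"
    unfolding lin_over_def by auto
qed

lemma gcd_to_div_partition:
  assumes "gcd_to_div \<Psi> u E d m Z Y W"
  shows "Z \<inter> Y = {}" "Z \<inter> W = {}" "Y \<inter> W = {}" "Z \<union> Y \<union> W = {..<m}"
proof -
  from assms have "Z \<inter> Y = {} \<and> Z \<inter> W = {} \<and> Y \<inter> W = {} \<and> Z \<union> Y \<union> W = {..<m}"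
    unfolding gcd_to_div_def by (elim conjE) (intro conjI; assumption)
  then show "Z \<inter> Y = {}" "Z \<inter> W = {}" "Y \<inter> W = {}" "Z \<union> Y \<union> W = {..<m}" by simp_all
qed

lemma gcd_to_div_lhs_over:
  assumes "gcd_to_div \<Psi> u E d m Z Y W" "(l, r) \<in> set \<Psi>"
  shows "lin_over {..<m} l"
proof -
  have "\<forall>p \<in> polys_of \<Psi>. lin_over {..<m} p"
    using assms(1) unfolding gcd_to_div_def by (elim conjE)
  moreover have "l \<in> polys_of \<Psi>" using assms(2) by (force simp: polys_of_def)
  ultimately show ?thesis by blast
qed

lemma Mset_constants_zero_if_parallel_lhs:
  assumes "\<not> constant_obstruction \<Psi>" "(g, h) \<in> set \<Psi>"
    and "lin_smult b g = lin_smult k f" "b \<noteq> 0" "k \<noteq> 0" "lvars f \<noteq> {}"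
    and "lin_const c \<in> Mset \<Psi> f"
  shows "c = 0"
proof -
  have "lvars g = lvars f" using lvars_smult assms(3-5) by metis
  then have "g \<noteq> lin_zero" using assms(6) by auto
  then obtain f' where f': "primitive_part_of f' g" using primitive_part_exists by blast
  then have "lin_smult k f = lin_smult (b * lin_content g) f'"
    using assms(3) by (simp add: primitive_part_of_def lin_eq_iff mult.assoc)
  then have "lin_smult k (lin_const c) \<in> Mset \<Psi> f'"
    using Mset_smult_transfer[OF _ assms(7)] smult_in_Mset by metis
  moreover have "lin_smult k (lin_const c) = lin_const (k * c)" by (simp add: lin_eq_iff)
  moreover have "lvars f' \<noteq> {}"
    using lvars_primitive_part[OF f'] \<open>lvars g = lvars f\<close> assms(6) by simp
  ultimately have "lin_const (k * c) \<in> Mset \<Psi> f'" "lvars f' \<noteq> {}" by simp_all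
  with assms(1,2) f' have "k * c = 0" unfolding constant_obstruction_def by blast
  with assms(5) show ?thesis by simp
qed

text \<open>A left-hand side g over the z's is reached by propagation only through a multiple b g that
  is k f plus a polynomial in the w's; such a b g is constant, so b = 0.\<close>
lemma Mset_subset_smult_plus_over_W:
  assumes gd: "gcd_to_div \<Psi> u E d m Z Y W"
    and "lvars f \<subseteq> Y" "\<forall>c. lin_const c \<in> Mset \<Psi> f \<longrightarrow> c = 0"
  shows "Mset \<Psi> f \<subseteq> smult_plus_over f W"
proof (rule Mset_subset_smult_plus_over)
  fix g h b
  assume gh: "(g, h) \<in> set \<Psi>" and "lin_smult b g \<in> Mset \<Psi> f"
    and "lin_smult b g \<in> smult_plus_over f W"
  then obtain k p where p: "lvars p \<subseteq> W" "lin_smult b g = lin_add (lin_smult k f) p"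
    unfolding smult_plus_over_def by blast
  show "lin_smult b h \<in> smult_plus_over f W"
  proof (cases "lvars h \<subseteq> W")
    case True
    then show ?thesis
      using lvars_smult_subset smult_plus_over_if_lvars_subset by (metis order_trans)
  next
    case False
    then have gZ: "lvars g \<subseteq> Z" and "snd g > 0"
      using gcd_to_div_constraint[OF gd gh] by auto
    have "b * fst g i = 0" for i
    proof (cases "i \<in> Z")
      case True
      then have "fst f i = 0" "fst p i = 0"
        using assms(2) p(1) gcd_to_div_partition[OF gd] by (auto simp: lvars_def)
      then show ?thesis using p(2) by (metis add.right_neutral lin_simps(1,3) mult_zero_right)
    next
      case False
      then show ?thesis using gZ by (auto simp: lvars_def)
    qed
    then have "lin_smult b g = lin_const (b * snd g)" by (simp add: lin_eq_iff)
    with \<open>lin_smult b g \<in> Mset \<Psi> f\<close> have "lin_const (b * snd g) \<in> Mset \<Psi> f" by simp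
    with assms(3) have "b * snd g = 0" by blast
    with \<open>snd g > 0\<close> have "b = 0" by simp
    then have "lvars (lin_smult b h) \<subseteq> W" by (simp add: lvars_def)
    then show ?thesis by (rule smult_plus_over_if_lvars_subset)
  qed
qed

lemma Mset_multiple_below_leading_var:
  assumes gd: "gcd_to_div \<Psi> u E d m Z Y W" and "\<not> constant_obstruction \<Psi>"
    and ZY: "\<forall>z \<in> Z. \<forall>y \<in> Y. r z < r y" and YW: "\<forall>y \<in> Y. \<forall>w \<in> W. r y < r w"
    and ZW: "\<forall>z \<in> Z. \<forall>w \<in> W. r z < r w"
    and x: "leading_var r f x" and e: "e \<in> Mset \<Psi> f" "lvars e \<subseteq> {j. r j \<le> r x}"
  shows "\<exists>b. e = lin_smult b f"
proof (cases "\<exists>g h b k. (g, h) \<in> set \<Psi> \<and> b \<noteq> 0 \<and> lin_smult b g = lin_smult k f")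
  case False
  then show ?thesis using Mset_eq_multiples_if_no_parallel_lhs e(1) by blast
next
  case True
  then obtain g h b k where gh: "(g, h) \<in> set \<Psi>" "b \<noteq> 0" "lin_smult b g = lin_smult k f"
    by blast
  have "g \<noteq> lin_zero" using gcd_to_div_constraint(2)[OF gd gh(1)] by auto
  with gh(2,3) have "k \<noteq> 0" by (metis lin_smult_eq_zero_iff)
  with gh(2,3) have "lvars f = lvars g" by (metis lvars_smult)
  have "x \<in> lvars f" using x by (simp add: leading_var_def)
  have no_const: "\<forall>c. lin_const c \<in> Mset \<Psi> f \<longrightarrow> c = 0"
    using Mset_constants_zero_if_parallel_lhs[OF assms(2) gh(1,3,2)] \<open>k \<noteq> 0\<close> \<open>x \<in> lvars f\<close> by blast
  note disjoint = gcd_to_div_partition[OF gd]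
  have e_below: "lvars e \<inter> S = {}" if "\<forall>s \<in> S. r x < r s" for S
    using that e(2) by force
  consider "lvars f \<subseteq> Z" | "lvars f \<subseteq> Y"
    using gcd_to_div_constraint(1)[OF gd gh(1)] \<open>lvars f = lvars g\<close> by blast
  then show ?thesis
  proof cases
    case 1
    have "\<forall>(g, h) \<in> set \<Psi>. lvars h \<subseteq> Y \<union> W"
      using gcd_to_div_constraint(1)[OF gd] by blast
    then have "Mset \<Psi> f \<subseteq> smult_plus_over f (Y \<union> W)" by (rule Mset_subset_smult_plus_over_rhs)
    moreover have "lvars f \<inter> (Y \<union> W) = {}" using 1 disjoint by blast
    moreover have "lvars e \<inter> (Y \<union> W) = {}"
      using 1 \<open>x \<in> lvars f\<close> ZY ZW by (intro e_below) blast
    ultimately show ?thesis using Mset_multiple_if_smult_plus_over no_const e(1) by blast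
  next
    case 2
    have "Mset \<Psi> f \<subseteq> smult_plus_over f W"
      using Mset_subset_smult_plus_over_W[OF gd 2 no_const] .
    moreover have "lvars f \<inter> W = {}" using 2 disjoint by blast
    moreover have "lvars e \<inter> W = {}"
      using 2 \<open>x \<in> lvars f\<close> YW by (intro e_below) blast
    ultimately show ?thesis using Mset_multiple_if_smult_plus_over no_const e(1) by blast
  qed
qed

lemma increasing_for_block_order:
  assumes "gcd_to_div \<Psi> u E d m Z Y W" "\<not> constant_obstruction \<Psi>"
    and "\<forall>z \<in> Z. \<forall>y \<in> Y. r z < r y" "\<forall>y \<in> Y. \<forall>w \<in> W. r y < r w"
    and "\<forall>z \<in> Z. \<forall>w \<in> W. r z < r w"
  shows "increasing_for \<Psi> m r"
  unfolding increasing_for_def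
proof (intro allI impI)
  fix f x assume f: "lin_over {..<m} f \<and> primitive f \<and> leading_var r f x"
  let ?V = "{j. j < m \<and> r j \<le> r x}"
  show "{p \<in> Mset \<Psi> f. lin_over ?V p} = {lin_smult b f | b. True}"
  proof (intro equalityI subsetI)
    fix p assume "p \<in> {p \<in> Mset \<Psi> f. lin_over ?V p}"
    then have "p \<in> Mset \<Psi> f" "lvars p \<subseteq> {j. r j \<le> r x}" by (auto simp: lin_over_def)
    with Mset_multiple_below_leading_var[OF assms] f show "p \<in> {lin_smult b f | b. True}" by blast
  next
    fix p assume "p \<in> {lin_smult b f | b. True}"
    then obtain b where p: "p = lin_smult b f" by blast
    have "lvars f \<subseteq> ?V" using f by (auto simp: lin_over_def leading_var_def)
    then have "lin_over ?V p" using p lvars_smult_subset by (fastforce simp: lin_over_def)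
    then show "p \<in> {p \<in> Mset \<Psi> f. lin_over ?V p}" using p smult_in_Mset by blast
  qed
qed

lemma var_order_of_list:
  assumes "distinct L" "set L = {..<m}"
  shows "\<exists>r. var_order m r \<and> (\<forall>i < m. r (L ! i) = i)"
proof (intro exI conjI allI impI)
  have "length L = m" using distinct_card[OF assms(1)] assms(2) by simp
  then have bij: "bij_betw ((!) L) {..<m} {..<m}" using bij_betw_nth assms by metis
  then show "var_order m (the_inv_into {..<m} ((!) L))"
    unfolding var_order_def by (rule bij_betw_the_inv_into)
  show "the_inv_into {..<m} ((!) L) (L ! i) = i" if "i < m" for i
    using bij that by (simp add: bij_betw_def the_inv_into_f_f)
qed

lemma block_order_exists:
  assumes "Z \<inter> Y = {}" "Z \<inter> W = {}" "Y \<inter> W = {}" "Z \<union> Y \<union> W = {..<m}"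
  obtains r where "var_order m r" "\<forall>z \<in> Z. \<forall>y \<in> Y. r z < r y"
    "\<forall>y \<in> Y. \<forall>w \<in> W. r y < r w" "\<forall>z \<in> Z. \<forall>w \<in> W. r z < r w"
proof -
  have "finite Z" "finite Y" "finite W" using assms(4) by (metis finite_Un finite_lessThan)+
  then obtain LZ LY LW where L: "distinct LZ" "set LZ = Z" "distinct LY" "set LY = Y"
    "distinct LW" "set LW = W"
    using finite_distinct_list by metis
  let ?L = "LZ @ LY @ LW"
  have L_distinct: "distinct ?L" and L_set: "set ?L = {..<m}" using L assms by auto
  obtain r where r: "var_order m r" "\<forall>i < m. r (?L ! i) = i"
    using var_order_of_list[OF L_distinct L_set] by blast
  have m: "length ?L = m"
    using distinct_card[OF L_distinct] L_set by simp
  have rank: "r (?L ! i) = i" if "i < m" for i using r(2) that by blast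
  have Z: "r z < length LZ" if z: "z \<in> Z" for z
  proof -
    obtain i where "i < length LZ" "z = LZ ! i" using L(2) z by (auto simp: in_set_conv_nth)
    then show ?thesis using rank[of i] m by (simp add: nth_append)
  qed
  have Y: "length LZ \<le> r y \<and> r y < length LZ + length LY" if y: "y \<in> Y" for y
  proof -
    obtain j where "j < length LY" "y = LY ! j" using L(4) y by (auto simp: in_set_conv_nth)
    then show ?thesis using rank[of "length LZ + j"] m by (simp add: nth_append)
  qed
  have W: "length LZ + length LY \<le> r w" if w: "w \<in> W" for w
  proof -
    obtain j where "j < length LW" "w = LW ! j" using L(6) w by (auto simp: in_set_conv_nth)
    then show ?thesis using rank[of "length LZ + length LY + j"] m by (simp add: nth_append)
  qed
  have "\<forall>z \<in> Z. \<forall>y \<in> Y. r z < r y" using Z Y by (meson less_le_trans)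
  moreover have "\<forall>y \<in> Y. \<forall>w \<in> W. r y < r w" using Y W by (meson less_le_trans)
  moreover have "\<forall>z \<in> Z. \<forall>w \<in> W. r z < r w" using Z W by (meson le_add1 less_le_trans)
  ultimately show ?thesis using that r(1) by blast
qed

theorem mainTheorem16:
  assumes "gcd_to_div \<Psi> u E d m Z Y W"
  shows "(\<not> increasing \<Psi> m \<longrightarrow>
            (\<exists>f l r. (l, r) \<in> set \<Psi> \<and> primitive_part_of f l \<and> lvars f \<noteq> {} \<and>
                     (\<exists>c. c \<noteq> 0 \<and> lin_const c \<in> Mset \<Psi> f)))
       \<and> (increasing \<Psi> m \<longrightarrow>
            (\<forall>r. var_order m r \<and>
                 (\<forall>z \<in> Z. \<forall>y \<in> Y. r z < r y) \<and>
                 (\<forall>y \<in> Y. \<forall>w \<in> W. r y < r w) \<and>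
                 (\<forall>z \<in> Z. \<forall>w \<in> W. r z < r w)
                 \<longrightarrow> increasing_for \<Psi> m r))"
proof -
  have "increasing \<Psi> m \<longleftrightarrow> \<not> constant_obstruction \<Psi>"
  proof
    assume "increasing \<Psi> m"
    then show "\<not> constant_obstruction \<Psi>"
      using not_constant_obstruction_if_increasing gcd_to_div_lhs_over[OF assms] by blast
  next
    assume no_obstruction: "\<not> constant_obstruction \<Psi>"
    obtain r where "var_order m r" "\<forall>z \<in> Z. \<forall>y \<in> Y. r z < r y"
      "\<forall>y \<in> Y. \<forall>w \<in> W. r y < r w" "\<forall>z \<in> Z. \<forall>w \<in> W. r z < r w"
      by (rule block_order_exists[OF gcd_to_div_partition[OF assms]])
    with increasing_for_block_order[OF assms no_obstruction]
    show "increasing \<Psi> m" unfolding increasing_def by blast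
  qed
  then show ?thesis
    using increasing_for_block_order[OF assms] unfolding constant_obstruction_def by blast
qed

end
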